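(* Let $Y$ be a real normed space. (i) Let $A\neq Y$ be a nonempty closed convex cone of $Y$ (equivalently $A^*\neq\{0\}$) and $e\in Y$. Then $e\in\operatorname{int}(A)$ if and only if $\inf\{y^*(e):y^*\in S_{Y^*}\cap A^*\}>0$. Consequently, $\operatorname{int}(A)\neq\emptyset$ if and only if either $A=Y$ (equivalently $A^*=\{0\}$) or $0\notin\overline{\operatorname{conv}}^{w^*}(S_{Y^*}\cap A^* )$. (ii) Let $K$ be a nonempty closed convex subset of $Y$. Then $\operatorname{int}(\mathcal{R}_K)\neq\emptyset$ if and only if either $K=Y$ or $0\notin\overline{\operatorname{conv}}^{w^*}(S_{Y^*}\cap(-\operatorname{bar}(K)))$.
   Context: $Y^*$ is the dual of $Y$, $S_{Y^*}$ its unit sphere, $\overline{\operatorname{conv}}^{w^*}$ the weak-star closed convex hull. $A^*:=\{y^*\in Y^*:y^*(y)\ge0\ \forall y\in A\}$. $\operatorname{bar}(K):=\{y^*\in Y^*:\sup_{y\in K}y^*(y)<+\infty\}$; $\mathcal{R}_K:=\{v\in Y:x+\lambda v\in K\ \forall\lambda>0,\forall x\in K\}$. *)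

theory Defs
  imports "HOL-Analysis.Analysis"
begin

text \<open>The dual space Y* of a real normed space Y is modelled as the type
  of bounded linear functionals with the operator norm.\<close>

definition weak_star_topology :: "('a::real_normed_vector \<Rightarrow>\<^sub>L real) topology" where
  "weak_star_topology =
     pullback_topology UNIV blinfun_apply (product_topology (\<lambda>_. euclideanreal) UNIV)"

definition wstar_closed_convex_hull ::
  "('a::real_normed_vector \<Rightarrow>\<^sub>L real) set \<Rightarrow> ('a \<Rightarrow>\<^sub>L real) set" where
  "wstar_closed_convex_hull S =
     \<Inter>{C. convex C \<and> closedin weak_star_topology C \<and> S \<subseteq> C}"

definition dual_cone :: "'a::real_normed_vector set \<Rightarrow> ('a \<Rightarrow>\<^sub>L real) set" where
  "dual_cone A = {f. \<forall>y\<in>A. 0 \<le> blinfun_apply f y}"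

definition barrier_cone :: "'a::real_normed_vector set \<Rightarrow> ('a \<Rightarrow>\<^sub>L real) set" where
  "barrier_cone K = {f. bdd_above (blinfun_apply f ` K)}"

definition recession_cone :: "'a::real_normed_vector set \<Rightarrow> 'a set" where
  "recession_cone K = {v. \<forall>x\<in>K. \<forall>l::real. l > 0 \<longrightarrow> x + l *\<^sub>R v \<in> K}"

end

theory Submission
  imports Defs "HOL-Analysis.Finite_Function_Topology"
begin

(* A point e is interior to a closed convex cone A iff the norm-one functionals of
   the dual cone are bounded away from 0 at e: if cball e r lies in A, then
   r * norm f <= f e for every f that is nonnegative on A; conversely a point near e
   but outside A is separated from A by a norm-one functional (Hahn-Banach, proved
   algebraically via Zorn's lemma, so Y need not be complete), whose negative lies in
   the dual cone and is small at e. The recession cone of K is handled in the same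
   way, with -bar(K) in the role of A*.
   A weak-star closed set avoiding 0 avoids a neighbourhood of 0 described by finitely
   many evaluations. Separating the weak-star closed convex hull from 0 therefore takes
   place in a finite-dimensional space of values, and the separating functional there
   pulls back to an evaluation at a point e; so 0 lies outside the hull iff some
   evaluation is uniformly positive on the dual set, i.e. iff the interior is nonempty. *)

section \<open>Hahn--Banach for sublinear functionals\<close>

definition sublinear :: "('a::real_vector \<Rightarrow> real) \<Rightarrow> bool" where
  "sublinear p \<longleftrightarrow>
     (\<forall>x y. p (x + y) \<le> p x + p y) \<and> (\<forall>c x. 0 < c \<longrightarrow> p (c *\<^sub>R x) = c * p x)"

lemma sublinear_add: "sublinear p \<Longrightarrow> p (x + y) \<le> p x + p y"
  by (simp add: sublinear_def)

lemma sublinear_scaleR: "sublinear p \<Longrightarrow> 0 < c \<Longrightarrow> p (c *\<^sub>R x) = c * p x"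
  by (simp add: sublinear_def)

lemma sublinear_zero: "sublinear p \<Longrightarrow> p 0 = 0"
  using sublinear_scaleR[of p 2 0] by simp

definition dominated_graph :: "('a::real_vector \<Rightarrow> real) \<Rightarrow> ('a \<times> real) set \<Rightarrow> bool" where
  "dominated_graph p G \<longleftrightarrow> subspace G \<and> (\<forall>x a. (x, a) \<in> G \<longrightarrow> a \<le> p x)"

lemma dominated_graph_unique:
  assumes p: "sublinear p" and G: "dominated_graph p G" and "(x, a) \<in> G" "(x, b) \<in> G"
  shows "a = b"
proof -
  have Gs: "subspace G" using G by (simp add: dominated_graph_def)
  have "(x, a) - (x, b) \<in> G" "(x, b) - (x, a) \<in> G"
    using subspace_diff[OF Gs] assms(3,4) by blast+
  then have "a - b \<le> p 0" "b - a \<le> p 0"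
    using G unfolding dominated_graph_def by auto
  then show ?thesis using sublinear_zero[OF p] by simp
qed

text \<open>A value c for the new vector w is admissible iff
  b - p (u - w) \<le> c \<le> p (v + w) - b' for all (u, b), (v, b') in the graph, and
  subadditivity of p makes the lower bounds lie below the upper bounds.\<close>
lemma dominated_graph_extend:
  assumes p: "sublinear p" and G: "dominated_graph p G"
  shows "\<exists>c. dominated_graph p (span (insert (w, c) G))"
proof -
  have Gs: "subspace G" and Gp: "\<And>x a. (x, a) \<in> G \<Longrightarrow> a \<le> p x"
    using G by (auto simp: dominated_graph_def)
  have scale: "(c *\<^sub>R x, c * a) \<in> G" if "(x, a) \<in> G" for x a c
    using subspace_scale[OF Gs that, of c] by simp
  have gap: "b - p (u - w) \<le> p (v + w) - b'" if "(u, b) \<in> G" "(v, b') \<in> G" for u b v b'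
  proof -
    have "b + b' \<le> p ((u - w) + (v + w))"
      using Gp subspace_add[OF Gs that] by simp
    then show ?thesis using sublinear_add[OF p, of "u - w" "v + w"] by linarith
  qed
  define S where "S = {b - p (u - w) | u b. (u, b) \<in> G}"
  define c where "c = Sup S"
  have "(0, 0) \<in> G" using subspace_0[OF Gs] by (simp add: zero_prod_def)
  then have S: "S \<noteq> {}" "bdd_above S"
    using gap[OF _ \<open>(0, 0) \<in> G\<close>] unfolding S_def bdd_above_def
    by (blast, auto intro!: exI[of _ "p w"])
  have lower: "b - p (u - w) \<le> c" if "(u, b) \<in> G" for u b
    unfolding c_def using that by (intro cSup_upper[OF _ S(2)]) (auto simp: S_def)
  have upper: "c \<le> p (v + w) - b'" if "(v, b') \<in> G" for v b'
    unfolding c_def using gap[OF _ that] by (intro cSup_least[OF S(1)]) (auto simp: S_def)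
  have "a \<le> p x" if xa: "(x, a) \<in> span (insert (w, c) G)" for x a
  proof -
    have "span G = G" using Gs by (simp add: span_eq_iff)
    then obtain k where "(x, a) - k *\<^sub>R (w, c) \<in> G"
      using xa unfolding span_insert \<open>span G = G\<close> by blast
    then have kG: "(x - k *\<^sub>R w, a - k * c) \<in> G" by simp
    consider "k = 0" | "k > 0" | "k < 0" by linarith
    then show ?thesis
    proof cases
      case 1
      then show ?thesis using Gp kG by simp
    next
      case 2
      have "c \<le> p ((1/k) *\<^sub>R (x - k *\<^sub>R w) + w) - (1/k) * (a - k * c)"
        by (rule upper[OF scale[OF kG]])
      also have "(1/k) *\<^sub>R (x - k *\<^sub>R w) + w = (1/k) *\<^sub>R x"
        using 2 by (simp add: algebra_simps)
      also have "p ((1/k) *\<^sub>R x) = (1/k) * p x"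
        using 2 by (intro sublinear_scaleR[OF p]) simp
      finally have "c \<le> (1/k) * p x - (1/k) * (a - k * c)" .
      then show ?thesis using 2 by (simp add: field_simps)
    next
      case 3
      have "(-1/k) * (a - k * c) - p ((-1/k) *\<^sub>R (x - k *\<^sub>R w) - w) \<le> c"
        by (rule lower[OF scale[OF kG]])
      also have "(-1/k) *\<^sub>R (x - k *\<^sub>R w) - w = (-1/k) *\<^sub>R x"
        using 3 by (simp add: algebra_simps)
      also have "p ((-1/k) *\<^sub>R x) = (-1/k) * p x"
        using 3 by (intro sublinear_scaleR[OF p]) simp
      finally have "(-1/k) * (a - k * c) - (-1/k) * p x \<le> c" .
      then show ?thesis using 3 by (simp add: field_simps)
    qed
  qed
  then show ?thesis by (auto simp: dominated_graph_def subspace_span)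
qed

text \<open>Partial functionals are represented by their graphs, so that Zorn's lemma
  applies to subspaces of the product space ordered by inclusion.\<close>
lemma hahn_banach_graph:
  assumes p: "sublinear p" and G0: "dominated_graph p G0"
  shows "\<exists>f. linear f \<and> (\<forall>x. f x \<le> p x) \<and> (\<forall>x a. (x, a) \<in> G0 \<longrightarrow> f x = a)"
proof -
  define \<A> where "\<A> = {G. dominated_graph p G \<and> G0 \<subseteq> G}"
  have "\<Union>\<C> \<in> \<A>" if "\<C> \<noteq> {}" "subset.chain \<A> \<C>" for \<C>
  proof -
    have sub: "subspace G" if "G \<in> \<C>" for G
      using that \<open>subset.chain \<A> \<C>\<close> by (auto simp: subset.chain_def \<A>_def dominated_graph_def)
    have "subspace (\<Union>\<C>)"
      unfolding subspace_def
    proof (intro conjI ballI allI)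
      show "0 \<in> \<Union>\<C>" using \<open>\<C> \<noteq> {}\<close> sub subspace_0 by blast
      show "x + y \<in> \<Union>\<C>" if xy: "x \<in> \<Union>\<C>" "y \<in> \<Union>\<C>" for x y
      proof -
        obtain X Y where XY: "X \<in> \<C>" "Y \<in> \<C>" "x \<in> X" "y \<in> Y" using xy by blast
        then have "X \<subseteq> Y \<or> Y \<subseteq> X" using \<open>subset.chain \<A> \<C>\<close> by (auto simp: subset.chain_def)
        then show ?thesis using XY sub subspace_add by blast
      qed
      show "c *\<^sub>R x \<in> \<Union>\<C>" if "x \<in> \<Union>\<C>" for c x
        using that sub subspace_scale by blast
    qed
    moreover have CA: "\<C> \<subseteq> \<A>" using \<open>subset.chain \<A> \<C>\<close> by (simp add: subset.chain_def)
    then have "G0 \<subseteq> \<Union>\<C>" using \<open>\<C> \<noteq> {}\<close> unfolding \<A>_def by blast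
    ultimately show ?thesis using CA unfolding \<A>_def dominated_graph_def by auto
  qed
  moreover have "G0 \<in> \<A>" using G0 by (simp add: \<A>_def)
  ultimately obtain M where M: "M \<in> \<A>" and Mmax: "\<And>G. G \<in> \<A> \<Longrightarrow> M \<subseteq> G \<Longrightarrow> G = M"
    using subset_Zorn_nonempty[of \<A>] by blast
  have MG: "dominated_graph p M" and Ms: "subspace M" using M by (auto simp: \<A>_def dominated_graph_def)
  have total: "\<exists>a. (x, a) \<in> M" for x
  proof -
    obtain c where c: "dominated_graph p (span (insert (x, c) M))"
      using dominated_graph_extend[OF p MG] by blast
    have "M \<subseteq> span (insert (x, c) M)"
      by (meson span_superset subset_insertI subset_trans)
    then have "span (insert (x, c) M) = M"
      using M c by (intro Mmax) (auto simp: \<A>_def)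
    then show ?thesis using span_base[of "(x, c)"] by blast
  qed
  define f where "f x = (SOME a. (x, a) \<in> M)" for x
  have fM: "(x, f x) \<in> M" for x
    unfolding f_def using total by (rule someI_ex)
  have "linear f"
  proof (rule linearI)
    fix x y :: 'a and c :: real
    have "(x + y, f x + f y) \<in> M" using subspace_add[OF Ms fM fM] by simp
    then show "f (x + y) = f x + f y" by (rule dominated_graph_unique[OF p MG fM])
    have "(c *\<^sub>R x, c * f x) \<in> M" using subspace_scale[OF Ms fM] by simp
    then show "f (c *\<^sub>R x) = c *\<^sub>R f x" using dominated_graph_unique[OF p MG fM] by simp
  qed
  moreover have "f x \<le> p x" for x using fM MG by (auto simp: dominated_graph_def)
  moreover have "f x = a" if "(x, a) \<in> G0" for x a
    using dominated_graph_unique[OF p MG fM] that M by (auto simp: \<A>_def)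
  ultimately show ?thesis by blast
qed

lemma sublinear_supporting_linear:
  assumes p: "sublinear p"
  shows "\<exists>f. linear f \<and> (\<forall>x. f x \<le> p x) \<and> f z = p z"
proof -
  have "s * p z \<le> p (s *\<^sub>R z)" for s
  proof (cases s "0::real" rule: linorder_cases)
    case less
    have "0 \<le> p z + p (-z)"
      using sublinear_add[OF p, of z "-z"] sublinear_zero[OF p] by simp
    then have "s * (p z + p (-z)) \<le> 0"
      using less by (simp add: mult_nonpos_nonneg)
    then have "s * p z \<le> (-s) * p (-z)"
      by (simp add: algebra_simps)
    also have "\<dots> = p (s *\<^sub>R z)"
      using sublinear_scaleR[OF p, of "-s" "-z"] less by simp
    finally show ?thesis .
  qed (use sublinear_zero[OF p] sublinear_scaleR[OF p] in auto)
  then have "dominated_graph p (span {(z, p z)})"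
    unfolding dominated_graph_def by (intro conjI subspace_span) (auto simp: span_singleton)
  from hahn_banach_graph[OF p this] obtain f
    where "linear f" "\<forall>x. f x \<le> p x" "\<forall>x a. (x, a) \<in> span {(z, p z)} \<longrightarrow> f x = a"
    by blast
  then show ?thesis using span_base[of "(z, p z)"] by blast
qed

section \<open>Separation in real normed spaces\<close>

lemma le_infdist: "A \<noteq> {} \<Longrightarrow> (\<And>a. a \<in> A \<Longrightarrow> c \<le> dist x a) \<Longrightarrow> c \<le> infdist x A"
  by (simp add: infdist_notempty cINF_greatest)

lemma sublinear_infdist_convex_cone:
  fixes D :: "'a::real_normed_vector set"
  assumes D: "convex_cone D"
  shows "sublinear (\<lambda>z. infdist z D)"
proof -
  have ne: "D \<noteq> {}" using D by (auto simp: convex_cone_def)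
  have "infdist (x + z) D \<le> infdist x D + infdist z D" for x z
  proof -
    have "infdist (x + z) D - dist x a \<le> dist z b" if "a \<in> D" "b \<in> D" for a b
      using infdist_le[OF convex_cone_add[OF D that], of "x + z"] dist_triangle_add[of x z a b]
      by linarith
    then have "infdist (x + z) D - infdist x D \<le> dist z b" if "b \<in> D" for b
      using that le_infdist[OF ne, of "infdist (x + z) D - dist z b" x] by fastforce
    then show ?thesis using le_infdist[OF ne] by fastforce
  qed
  moreover have "infdist (c *\<^sub>R x) D = c * infdist x D" if c: "c > 0" for c x
  proof -
    have dist_scale: "dist (c *\<^sub>R u) (c *\<^sub>R v) = c * dist u v" for u v :: 'a
      using c by (simp add: dist_norm flip: scaleR_diff_right)
    have "c *\<^sub>R a \<in> D" "(1/c) *\<^sub>R a \<in> D" if "a \<in> D" for a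
      using c that D by (auto intro: convex_cone_scaleR)
    then have up: "infdist (c *\<^sub>R x) D / c \<le> dist x a"
      and low: "c * infdist x D \<le> dist (c *\<^sub>R x) a" if "a \<in> D" for a
      using that c infdist_le[of "c *\<^sub>R a" D "c *\<^sub>R x"] infdist_le[of "(1/c) *\<^sub>R a" D x]
        dist_scale[of x "(1/c) *\<^sub>R a"] by (auto simp: dist_scale field_simps)
    have "infdist (c *\<^sub>R x) D / c \<le> infdist x D" by (rule le_infdist[OF ne up])
    moreover have "c * infdist x D \<le> infdist (c *\<^sub>R x) D" by (rule le_infdist[OF ne low])
    ultimately show ?thesis using c by (simp add: divide_le_eq mult.commute)
  qed
  ultimately show ?thesis by (simp add: sublinear_def)
qed

lemma convex_cone_cone_hull: "convex S \<Longrightarrow> S \<noteq> {} \<Longrightarrow> convex_cone (cone hull S)"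
  using cone_hull_empty_iff[of S] convex_cone_hull[of S] cone_cone_hull[of S]
  by (simp add: convex_cone_def conic_def cone_def)

text \<open>(y - k0) - t (k - y) = (1 + t) (y - m) for a convex combination m of k0 and k.\<close>
lemma infdist_cone_hull_diff_ge:
  fixes K :: "'a::real_normed_vector set"
  assumes K: "convex K" "k0 \<in> K" and far: "\<And>k. k \<in> K \<Longrightarrow> d \<le> dist y k"
  shows "d \<le> infdist (y - k0) (cone hull ((\<lambda>k. k - y) ` K))"
proof (rule le_infdist)
  show "cone hull ((\<lambda>k. k - y) ` K) \<noteq> {}" using K(2) cone_hull_empty_iff[of "(\<lambda>k. k - y) ` K"] by blast
next
  fix a assume "a \<in> cone hull ((\<lambda>k. k - y) ` K)"
  then obtain t k where a: "a = t *\<^sub>R (k - y)" "0 \<le> t" "k \<in> K"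
    by (auto simp: cone_hull_expl)
  define m where "m = (1 / (1 + t)) *\<^sub>R k0 + (t / (1 + t)) *\<^sub>R k"
  have "m \<in> K" unfolding m_def
    using a K by (intro convexD[OF K(1)]) (auto simp: add_divide_distrib[symmetric])
  have "(1 + t) *\<^sub>R m = k0 + t *\<^sub>R k" using a(2) by (simp add: m_def scaleR_add_right)
  then have "(y - k0) - a = (1 + t) *\<^sub>R (y - m)" by (simp add: a algebra_simps)
  then have "dist (y - k0) a = (1 + t) * dist y m" using a(2) by (simp add: dist_norm)
  moreover have "d \<le> dist y m" using far[OF \<open>m \<in> K\<close>] .
  ultimately show "d \<le> dist (y - k0) a"
    using a(2) zero_le_dist[of y m] by (smt (verit) mult_le_cancel_right1)
qed

lemma convex_separation_functional:
  fixes K :: "'a::real_normed_vector set"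
  assumes K: "convex K" "K \<noteq> {}" and d: "0 < d" and far: "\<And>k. k \<in> K \<Longrightarrow> d \<le> dist y k"
  shows "\<exists>f::'a \<Rightarrow>\<^sub>L real. norm f = 1 \<and> (\<forall>x\<in>K. blinfun_apply f x \<le> blinfun_apply f y)"
proof -
  obtain k0 where k0: "k0 \<in> K" using K by auto
  \<comment> \<open>The distance to the cone generated by K - y is sublinear, at most the norm,
    zero on K - y and at least d at y - k0; Hahn-Banach supplies the functional.\<close>
  define D where "D = cone hull ((\<lambda>k. k - y) ` K)"
  define q where "q z = infdist z D" for z
  have "convex_cone D" unfolding D_def using K by (intro convex_cone_cone_hull) auto
  then have "sublinear q" unfolding q_def by (rule sublinear_infdist_convex_cone)
  then obtain g where g: "linear g" "\<And>x. g x \<le> q x" "g (y - k0) = q (y - k0)"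
    using sublinear_supporting_linear by blast
  have "d \<le> g (y - k0)"
    using infdist_cone_hull_diff_ge[OF K(1) k0 far] g(3) by (simp add: q_def D_def)
  have q_norm: "q x \<le> norm x" for x
    using infdist_le[OF convex_cone_contains_0[OF \<open>convex_cone D\<close>], of x] by (simp add: q_def)
  have "\<bar>g x\<bar> \<le> norm x" for x
    using g(2)[of x] g(2)[of "-x"] q_norm[of x] q_norm[of "-x"] linear_neg[OF g(1)] by simp
  then have "bounded_linear g"
    using g(1) by (intro bounded_linear_intro[of _ 1]) (auto simp: linear_add linear_scale)
  then have F: "blinfun_apply (Blinfun g) = g" by (rule bounded_linear_Blinfun_apply)
  have "Blinfun g \<noteq> 0"
    using d \<open>d \<le> g (y - k0)\<close> F by (metis blinfun.zero_left less_le_not_le)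
  then have nF: "0 < norm (Blinfun g)" by simp
  have "g x \<le> g y" if "x \<in> K" for x
  proof -
    have "x - y \<in> D" unfolding D_def using that by (intro hull_inc) auto
    then have "g (x - y) \<le> 0" using g(2)[of "x - y"] by (simp add: q_def)
    then show ?thesis by (simp add: linear_diff[OF g(1)])
  qed
  moreover define f where "f = (1 / norm (Blinfun g)) *\<^sub>R Blinfun g"
  ultimately have "\<forall>x\<in>K. blinfun_apply f x \<le> blinfun_apply f y"
    using nF by (simp add: f_def F blinfun.scaleR_left divide_right_mono)
  moreover have "norm f = 1" using nF by (simp add: f_def)
  ultimately show ?thesis by blast
qed

lemma blinfun_gt_on_sphere:
  fixes f :: "'a::real_normed_vector \<Rightarrow>\<^sub>L real"
  assumes "0 \<le> c" "c < norm f" "0 < r"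
  shows "\<exists>u. norm u = r \<and> c * r < blinfun_apply f u"
proof -
  have "\<exists>x. c * norm x < \<bar>blinfun_apply f x\<bar>"
  proof (rule ccontr)
    assume "\<not> ?thesis"
    then have "norm f \<le> c"
      using assms norm_ge_zero[of "blinfun_apply f 0"]
      by (intro norm_blinfun_bound) (auto simp: not_less)
    then show False using assms(2) by simp
  qed
  then obtain x where x: "c * norm x < \<bar>blinfun_apply f x\<bar>" by blast
  then have "x \<noteq> 0" by auto
  define u where "u = (r / norm x) *\<^sub>R (if 0 \<le> blinfun_apply f x then x else -x)"
  have "norm u = r" using \<open>x \<noteq> 0\<close> assms(3) by (simp add: u_def)
  moreover have "blinfun_apply f u = (r / norm x) * \<bar>blinfun_apply f x\<bar>"
    by (simp add: u_def blinfun.scaleR_right blinfun.minus_right)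
  moreover have "c * r < (r / norm x) * \<bar>blinfun_apply f x\<bar>"
    using x \<open>x \<noteq> 0\<close> assms(3) by (simp add: field_simps)
  ultimately show ?thesis by metis
qed

text \<open>Separating the enlarged set K + cball 0 (d/2) from y turns the weak inequality
  into one with a gap.\<close>
lemma convex_strict_separation_functional:
  fixes K :: "'a::real_normed_vector set"
  assumes K: "convex K" "K \<noteq> {}" and d: "0 < d" and far: "\<And>k. k \<in> K \<Longrightarrow> d \<le> dist y k"
  shows "\<exists>f::'a \<Rightarrow>\<^sub>L real. norm f = 1 \<and> (\<forall>x\<in>K. blinfun_apply f x + d/4 \<le> blinfun_apply f y)"
proof -
  have "convex (K + cball 0 (d/2))" using K(1) by (intro convex_set_plus) auto
  moreover have "K + cball 0 (d/2) \<noteq> {}"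
    using K(2) d set_plus_intro[of _ K 0 "cball 0 (d/2)"] by fastforce
  moreover have "d/2 \<le> dist y z" if z: "z \<in> K + cball 0 (d/2)" for z
  proof -
    obtain k u where "k \<in> K" "norm u \<le> d/2" "z = k + u"
      using z by (auto elim!: set_plus_elim)
    then show ?thesis
      using far[of k] dist_triangle[of y k z] by (simp add: dist_norm)
  qed
  ultimately obtain f :: "'a \<Rightarrow>\<^sub>L real" where f: "norm f = 1"
    "\<And>z. z \<in> K + cball 0 (d/2) \<Longrightarrow> blinfun_apply f z \<le> blinfun_apply f y"
    using convex_separation_functional[of "K + cball 0 (d/2)" "d/2" y] d by auto
  obtain u where u: "norm u = d/2" "1/2 * (d/2) < blinfun_apply f u"
    using blinfun_gt_on_sphere[of "1/2" f "d/2"] f(1) d by auto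
  have "blinfun_apply f x + d/4 \<le> blinfun_apply f y" if "x \<in> K" for x
  proof -
    have "x + u \<in> K + cball 0 (d/2)" using that u(1) by auto
    then show ?thesis using f(2)[of "x + u"] u(2) by (simp add: blinfun.add_right)
  qed
  then show ?thesis using f(1) by blast
qed

lemma closed_convex_separation_functional:
  fixes K :: "'a::real_normed_vector set"
  assumes "closed K" "convex K" "K \<noteq> {}" "y \<notin> K"
  shows "\<exists>f::'a \<Rightarrow>\<^sub>L real. norm f = 1 \<and> (\<forall>x\<in>K. blinfun_apply f x < blinfun_apply f y)"
proof -
  have "0 < infdist y K" using assms infdist_pos_not_in_closed by blast
  with convex_strict_separation_functional[OF assms(2,3) this] show ?thesis
    using infdist_le by fastforce
qed

section \<open>Interior points and dual sets\<close>

lemma nonneg_on_cball_imp_norm_le: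
  fixes f :: "'a::real_normed_vector \<Rightarrow>\<^sub>L real"
  assumes C: "cball e r \<subseteq> C" and r: "0 < r" and pos: "\<And>x. x \<in> C \<Longrightarrow> 0 \<le> blinfun_apply f x"
  shows "r * norm f \<le> blinfun_apply f e"
proof -
  have "0 \<le> blinfun_apply f e" using C r by (intro pos) auto
  moreover have "norm (blinfun_apply f u) \<le> (blinfun_apply f e / r) * norm u" for u
  proof (cases "u = 0")
    case False
    define v where "v = (r / norm u) *\<^sub>R u"
    have "e - v \<in> C" "e + v \<in> C"
      using C r False by (auto simp: v_def dist_norm)
    then have "0 \<le> blinfun_apply f e - blinfun_apply f v" "0 \<le> blinfun_apply f e + blinfun_apply f v"
      using pos by (auto simp flip: blinfun.diff_right blinfun.add_right)
    then have "\<bar>blinfun_apply f v\<bar> \<le> blinfun_apply f e" by linarith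
    then show ?thesis
      using r False by (simp add: v_def blinfun.scaleR_right abs_mult field_simps)
  qed simp
  ultimately have "norm f \<le> blinfun_apply f e / r"
    using r by (intro norm_blinfun_bound) auto
  then show ?thesis using r by (simp add: field_simps)
qed

lemma interior_iff_uniformly_positive:
  fixes R :: "'a::real_normed_vector set" and \<Phi> :: "('a \<Rightarrow>\<^sub>L real) set"
  assumes \<Phi>: "\<Phi> \<subseteq> sphere 0 1"
    and nonneg: "\<And>f x. f \<in> \<Phi> \<Longrightarrow> x \<in> R \<Longrightarrow> 0 \<le> blinfun_apply f x"
    and separating: "\<And>y. y \<notin> R \<Longrightarrow> \<exists>f\<in>\<Phi>. blinfun_apply f y < 0"
  shows "e \<in> interior R \<longleftrightarrow> (\<exists>\<delta>>0. \<forall>f\<in>\<Phi>. \<delta> \<le> blinfun_apply f e)"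
proof
  assume "e \<in> interior R"
  then obtain r where r: "0 < r" "ball e r \<subseteq> R" by (auto simp: mem_interior)
  have "cball e (r/2) \<subseteq> ball e r" using r(1) by (intro subsetI) (simp add: dist_commute)
  then have "cball e (r/2) \<subseteq> R" using r(2) by blast
  then have "r/2 \<le> blinfun_apply f e" if "f \<in> \<Phi>" for f
    using nonneg_on_cball_imp_norm_le[of e "r/2" R f] that nonneg \<Phi> r(1) by auto
  then show "\<exists>\<delta>>0. \<forall>f\<in>\<Phi>. \<delta> \<le> blinfun_apply f e" using r(1) by (intro exI[of _ "r/2"]) auto
next
  assume "\<exists>\<delta>>0. \<forall>f\<in>\<Phi>. \<delta> \<le> blinfun_apply f e"
  then obtain \<delta> where \<delta>: "0 < \<delta>" "\<And>f. f \<in> \<Phi> \<Longrightarrow> \<delta> \<le> blinfun_apply f e" by blast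
  show "e \<in> interior R"
  proof (rule ccontr)
    assume "e \<notin> interior R"
    then obtain y where y: "dist e y < \<delta>" "y \<notin> R"
      using \<delta>(1) by (auto simp: mem_interior subset_iff)
    then obtain f where f: "f \<in> \<Phi>" "blinfun_apply f y < 0" using separating by blast
    have "blinfun_apply f (e - y) \<le> norm f * norm (e - y)"
      using norm_blinfun[of f "e - y"] by simp
    then have "blinfun_apply f e < \<delta>"
      using f \<Phi> y(1) by (auto simp: blinfun.diff_right dist_norm)
    then show False using \<delta>(2)[OF f(1)] by simp
  qed
qed

lemma dual_cone_separation:
  fixes A :: "'a::real_normed_vector set"
  assumes "closed A" "convex_cone A" "y \<notin> A"
  shows "\<exists>f\<in>sphere 0 1 \<inter> dual_cone A. blinfun_apply f y < 0"
proof -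
  obtain g :: "'a \<Rightarrow>\<^sub>L real" where g: "norm g = 1" "\<And>x. x \<in> A \<Longrightarrow> blinfun_apply g x < blinfun_apply g y"
    using closed_convex_separation_functional[of A y] assms by (auto simp: convex_cone_def)
  have "0 < blinfun_apply g y" using g(2)[OF convex_cone_contains_0[OF assms(2)]] by simp
  moreover have "blinfun_apply g x \<le> 0" if "x \<in> A" for x
  proof (rule ccontr)
    assume pos: "\<not> blinfun_apply g x \<le> 0"
    define t where "t = blinfun_apply g y / blinfun_apply g x"
    have "t *\<^sub>R x \<in> A" using pos \<open>0 < blinfun_apply g y\<close> that
      by (intro convex_cone_scaleR[OF assms(2)]) (simp_all add: t_def)
    then show False using g(2)[of "t *\<^sub>R x"] pos by (simp add: t_def blinfun.scaleR_right)
  qed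
  ultimately show ?thesis using g(1)
    by (intro bexI[of _ "-g"]) (auto simp: dual_cone_def blinfun.minus_left)
qed

lemma barrier_cone_recession_cone_nonpos:
  fixes K :: "'a::real_normed_vector set"
  assumes g: "g \<in> barrier_cone K" and "K \<noteq> {}" and v: "v \<in> recession_cone K"
  shows "blinfun_apply g v \<le> 0"
proof (rule ccontr)
  assume pos: "\<not> ?thesis"
  obtain x where x: "x \<in> K" using \<open>K \<noteq> {}\<close> by blast
  obtain B where B: "\<And>z. z \<in> K \<Longrightarrow> blinfun_apply g z \<le> B"
    using g by (auto simp: barrier_cone_def bdd_above_def)
  define l where "l = (\<bar>B - blinfun_apply g x\<bar> + 1) / blinfun_apply g v"
  have "0 < l" using pos by (simp add: l_def)
  then have "blinfun_apply g (x + l *\<^sub>R v) \<le> B" using v x B by (simp add: recession_cone_def)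
  moreover have "l * blinfun_apply g v = \<bar>B - blinfun_apply g x\<bar> + 1" using pos by (simp add: l_def)
  ultimately show False by (simp add: blinfun.add_right blinfun.scaleR_right)
qed

lemma recession_cone_separation:
  fixes K :: "'a::real_normed_vector set"
  assumes "closed K" "convex K" "y \<notin> recession_cone K"
  shows "\<exists>f\<in>sphere 0 1 \<inter> uminus ` barrier_cone K. blinfun_apply f y < 0"
proof -
  obtain x l where xl: "x \<in> K" "0 < l" "x + l *\<^sub>R y \<notin> K"
    using assms(3) by (auto simp: recession_cone_def)
  then obtain g :: "'a \<Rightarrow>\<^sub>L real" where g: "norm g = 1"
    "\<And>z. z \<in> K \<Longrightarrow> blinfun_apply g z < blinfun_apply g (x + l *\<^sub>R y)"
    using closed_convex_separation_functional[of K] assms(1,2) by blast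
  have "0 < blinfun_apply g y"
    using g(2)[OF xl(1)] xl(2) by (simp add: blinfun.add_right blinfun.scaleR_right zero_less_mult_iff)
  moreover have "g \<in> barrier_cone K"
    using g(2) by (auto simp: barrier_cone_def bdd_above_def intro: less_imp_le)
  ultimately show ?thesis using g(1)
    by (intro bexI[of _ "-g"]) (auto simp: blinfun.minus_left)
qed

lemma interior_closed_convex_cone_iff:
  fixes A :: "'a::real_normed_vector set"
  assumes "closed A" "convex_cone A"
  shows "e \<in> interior A \<longleftrightarrow> (\<exists>\<delta>>0. \<forall>f\<in>sphere 0 1 \<inter> dual_cone A. \<delta> \<le> blinfun_apply f e)"
  using dual_cone_separation[OF assms]
  by (intro interior_iff_uniformly_positive) (auto simp: dual_cone_def)

lemma interior_recession_cone_iff: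
  fixes K :: "'a::real_normed_vector set"
  assumes "closed K" "convex K" "K \<noteq> {}"
  shows "e \<in> interior (recession_cone K) \<longleftrightarrow>
    (\<exists>\<delta>>0. \<forall>f\<in>sphere 0 1 \<inter> uminus ` barrier_cone K. \<delta> \<le> blinfun_apply f e)"
  using recession_cone_separation[OF assms(1,2)] barrier_cone_recession_cone_nonpos[OF _ assms(3)]
  by (intro interior_iff_uniformly_positive) (auto simp: blinfun.minus_left)

section \<open>Weak-star closed convex hulls\<close>

lemma topspace_weak_star_topology [simp]: "topspace weak_star_topology = UNIV"
  by (simp add: weak_star_topology_def topspace_pullback_topology PiE_UNIV_domain)

lemma continuous_map_weak_star_eval:
  "continuous_map weak_star_topology euclideanreal (\<lambda>f. blinfun_apply f e)"
proof -
  have "continuous_map weak_star_topology euclideanreal ((\<lambda>h. h e) \<circ> blinfun_apply)"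
    unfolding weak_star_topology_def
    by (intro continuous_map_pullback continuous_map_product_projection) simp
  then show ?thesis by (simp add: o_def)
qed

lemma wstar_closed_convex_hull_minimal:
  "convex C \<Longrightarrow> closedin weak_star_topology C \<Longrightarrow> M \<subseteq> C \<Longrightarrow> wstar_closed_convex_hull M \<subseteq> C"
  unfolding wstar_closed_convex_hull_def by blast

lemma wstar_closed_convex_hull_superset: "M \<subseteq> wstar_closed_convex_hull M"
  unfolding wstar_closed_convex_hull_def by blast

lemma convex_wstar_closed_convex_hull: "convex (wstar_closed_convex_hull M)"
  unfolding wstar_closed_convex_hull_def by (rule convex_Inter) blast

lemma closedin_wstar_closed_convex_hull: "closedin weak_star_topology (wstar_closed_convex_hull M)"
  unfolding wstar_closed_convex_hull_def
  by (rule closedin_Inter) (use closedin_topspace[of weak_star_topology] in auto)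

lemma zero_notin_wstar_closed_convex_hull:
  assumes "0 < \<delta>" "\<And>f. f \<in> M \<Longrightarrow> \<delta> \<le> blinfun_apply f e"
  shows "0 \<notin> wstar_closed_convex_hull M"
proof -
  define H where "H = (\<lambda>f. blinfun_apply f e) -` {\<delta>..}"
  have "convex H"
    unfolding H_def by (intro convex_linear_vimage bounded_linear.linear[OF blinfun.bounded_linear_left]) simp
  moreover have "closedin weak_star_topology H"
    using closedin_continuous_map_preimage[OF continuous_map_weak_star_eval, of "{\<delta>..}" e]
    by (simp add: H_def vimage_def)
  ultimately have "wstar_closed_convex_hull M \<subseteq> H"
    using assms(2) by (intro wstar_closed_convex_hull_minimal) (auto simp: H_def)
  then show ?thesis using assms(1) by (auto simp: H_def)
qed

lemma weak_star_nhds_zero: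
  assumes "openin weak_star_topology U" "0 \<in> U"
  shows "\<exists>J \<epsilon>. finite J \<and> 0 < \<epsilon> \<and> (\<forall>f. (\<forall>i\<in>J. \<bar>blinfun_apply f i\<bar> < \<epsilon>) \<longrightarrow> f \<in> U)"
proof -
  obtain V where V: "openin (product_topology (\<lambda>_. euclideanreal) UNIV) V"
    and U: "U = blinfun_apply -` V"
    using assms(1) unfolding weak_star_topology_def openin_pullback_topology by auto
  have "(\<lambda>_. 0) \<in> V" using assms(2) U by (simp add: zero_blinfun.rep_eq[symmetric])
  then obtain B where B: "finite {i. B i \<noteq> UNIV}" "\<And>i. open (B i)" "\<And>i. 0 \<in> B i"
    "Pi\<^sub>E UNIV B \<subseteq> V"
    using V unfolding openin_product_topology_alt by (fastforce simp: PiE_UNIV_domain)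
  define J where "J = {i. B i \<noteq> UNIV}"
  have "\<exists>r>0. \<forall>t. \<bar>t\<bar> < r \<longrightarrow> t \<in> B i" for i
    using B(2,3)[of i] unfolding open_dist dist_real_def by force
  then obtain r where r: "\<And>i. 0 < r i" "\<And>i t. \<bar>t\<bar> < r i \<Longrightarrow> t \<in> B i" by metis
  define \<epsilon> where "\<epsilon> = Min (insert 1 (r ` J))"
  have "0 < \<epsilon>" using B(1) r(1) by (simp add: \<epsilon>_def J_def)
  moreover have "f \<in> U" if "\<forall>i\<in>J. \<bar>blinfun_apply f i\<bar> < \<epsilon>" for f
  proof -
    have "blinfun_apply f i \<in> B i" for i
    proof (cases "i \<in> J")
      case True
      then have "\<epsilon> \<le> r i" using B(1) by (simp add: \<epsilon>_def J_def)
      then show ?thesis using that True r(2) by fastforce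
    qed (simp add: J_def)
    then show ?thesis using B(4) U by (auto simp: PiE_UNIV_domain)
  qed
  ultimately show ?thesis using B(1) unfolding J_def by blast
qed

lemma lookup_scaleR_poly_mapping:
  "Poly_Mapping.lookup (c *\<^sub>R x) i = c * Poly_Mapping.lookup (x :: 'a \<Rightarrow>\<^sub>0 real) i"
proof -
  have "finite {i. c *\<^sub>R Poly_Mapping.lookup x i \<noteq> 0}"
    by (rule finite_subset[OF _ finite_keys[of x]]) (auto simp: in_keys_iff)
  then show ?thesis by (simp add: scaleR_poly_mapping_def)
qed

lemma abs_lookup_le_norm: "\<bar>Poly_Mapping.lookup x i\<bar> \<le> norm (x :: 'a \<Rightarrow>\<^sub>0 real)"
proof (cases "i \<in> Poly_Mapping.keys x")
  case True
  have "norm x = (\<Sum>n\<in>Poly_Mapping.keys x. \<bar>Poly_Mapping.lookup x n\<bar>)"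
    by (simp add: norm_poly_mapping_def dist_poly_mapping_def dist_real_def)
  moreover have "\<bar>Poly_Mapping.lookup x i\<bar> \<le> (\<Sum>n\<in>Poly_Mapping.keys x. \<bar>Poly_Mapping.lookup x n\<bar>)"
    by (rule member_le_sum[OF True]) auto
  ultimately show ?thesis by simp
qed (simp add: in_keys_iff)

text \<open>Finitely supported functions with their l1 norm serve as the finite-dimensional
  space of the values f i, i \<in> J.\<close>
definition evaluations :: "'a set \<Rightarrow> ('a::real_normed_vector \<Rightarrow>\<^sub>L real) \<Rightarrow> ('a \<Rightarrow>\<^sub>0 real)" where
  "evaluations J f = (\<Sum>i\<in>J. blinfun_apply f i *\<^sub>R Poly_Mapping.single i 1)"

lemma linear_evaluations: "linear (evaluations J)"
  by (rule linearI)
    (simp_all add: evaluations_def blinfun.add_left blinfun.scaleR_left scaleR_add_left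
      sum.distrib scaleR_sum_right)

lemma lookup_evaluations:
  assumes "finite J" "i \<in> J"
  shows "Poly_Mapping.lookup (evaluations J f) i = blinfun_apply f i"
proof -
  have "Poly_Mapping.lookup (evaluations J f) i = (\<Sum>j\<in>J. if j = i then blinfun_apply f j else 0)"
    by (auto simp: evaluations_def lookup_sum lookup_scaleR_poly_mapping lookup_single when_def
        intro!: sum.cong)
  then show ?thesis using assms by simp
qed

lemma blinfun_evaluations:
  "blinfun_apply \<psi> (evaluations J f) =
     blinfun_apply f (\<Sum>i\<in>J. blinfun_apply \<psi> (Poly_Mapping.single i 1) *\<^sub>R i)"
  by (simp add: evaluations_def blinfun.sum_right blinfun.scaleR_right mult.commute)

lemma wstar_closed_convex_hull_separation:
  fixes M :: "('a::real_normed_vector \<Rightarrow>\<^sub>L real) set"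
  assumes "0 \<notin> wstar_closed_convex_hull M"
  shows "\<exists>e \<delta>. 0 < \<delta> \<and> (\<forall>f\<in>M. \<delta> \<le> blinfun_apply f e)"
proof (cases "M = {}")
  case False
  define W where "W = wstar_closed_convex_hull M"
  have "openin weak_star_topology (- W)"
    using closedin_wstar_closed_convex_hull[of M] by (simp add: W_def closedin_def Compl_eq_Diff_UNIV)
  then obtain J \<epsilon> where J: "finite J" "0 < \<epsilon>"
    and small: "\<And>f. \<forall>i\<in>J. \<bar>blinfun_apply f i\<bar> < \<epsilon> \<Longrightarrow> f \<in> - W"
    using weak_star_nhds_zero[of "- W"] assms by (auto simp: W_def)
  have far: "\<epsilon> \<le> dist 0 (evaluations J f)" if fW: "f \<in> W" for f
  proof -
    obtain i where "i \<in> J" "\<epsilon> \<le> \<bar>blinfun_apply f i\<bar>"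
      using fW small by (force simp: not_less)
    then show ?thesis
      using abs_lookup_le_norm[of "evaluations J f" i] lookup_evaluations[OF J(1)] by simp
  qed
  have "convex (evaluations J ` W)"
    unfolding W_def by (rule convex_linear_image[OF linear_evaluations convex_wstar_closed_convex_hull])
  moreover have "evaluations J ` W \<noteq> {}"
    using False wstar_closed_convex_hull_superset[of M] by (auto simp: W_def)
  ultimately obtain \<psi> :: "('a \<Rightarrow>\<^sub>0 real) \<Rightarrow>\<^sub>L real"
    where \<psi>: "\<And>k. k \<in> evaluations J ` W \<Longrightarrow> blinfun_apply \<psi> k + \<epsilon>/4 \<le> blinfun_apply \<psi> 0"
    using convex_strict_separation_functional[of "evaluations J ` W" \<epsilon> 0] J(2) far by blast
  define e where "e = - (\<Sum>i\<in>J. blinfun_apply \<psi> (Poly_Mapping.single i 1) *\<^sub>R i)"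
  have "\<epsilon>/4 \<le> blinfun_apply f e" if "f \<in> M" for f
    using \<psi>[of "evaluations J f"] that wstar_closed_convex_hull_superset[of M]
    by (auto simp: W_def e_def blinfun_evaluations blinfun.minus_right)
  then show ?thesis using J(2) by (intro exI[of _ e] exI[of _ "\<epsilon>/4"]) auto
qed (auto intro: exI[of _ 1])

lemma zero_notin_wstar_closed_convex_hull_iff:
  "0 \<notin> wstar_closed_convex_hull M \<longleftrightarrow> (\<exists>e \<delta>. 0 < \<delta> \<and> (\<forall>f\<in>M. \<delta> \<le> blinfun_apply f e))"
  using zero_notin_wstar_closed_convex_hull wstar_closed_convex_hull_separation by metis

lemma uniformly_positive_iff_INF:
  fixes \<Phi> :: "('a::real_normed_vector \<Rightarrow>\<^sub>L real) set"
  assumes "\<Phi> \<noteq> {}" "\<Phi> \<subseteq> sphere 0 1"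
  shows "(\<exists>\<delta>>0. \<forall>f\<in>\<Phi>. \<delta> \<le> blinfun_apply f e) \<longleftrightarrow> 0 < (INF f\<in>\<Phi>. blinfun_apply f e)"
proof -
  have "- norm e \<le> blinfun_apply f e" if "f \<in> \<Phi>" for f
    using norm_blinfun[of f e] assms(2) that by auto
  then have "bdd_below ((\<lambda>f. blinfun_apply f e) ` \<Phi>)" by (intro bdd_belowI2)
  then show ?thesis
    using assms(1) by (meson cINF_greatest cINF_lower less_le_trans)
qed

lemma nonempty_iff_zero_notin_wstar_closed_convex_hull:
  assumes "\<And>e. e \<in> S \<longleftrightarrow> (\<exists>\<delta>>0. \<forall>f\<in>\<Phi>. \<delta> \<le> blinfun_apply f e)"
  shows "S \<noteq> {} \<longleftrightarrow> 0 \<notin> wstar_closed_convex_hull \<Phi>"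
  using assms zero_notin_wstar_closed_convex_hull_iff[of \<Phi>] by auto

theorem lemma3p6:
  fixes Ytype :: "'a::real_normed_vector itself"
  shows
   "(\<forall>A::'a set. \<forall>e. closed A \<and> convex_cone A \<and> A \<noteq> UNIV \<longrightarrow>
        (e \<in> interior A \<longleftrightarrow>
           (INF f\<in>sphere 0 1 \<inter> dual_cone A. blinfun_apply f e) > 0))
    \<and> (\<forall>A::'a set. closed A \<and> convex_cone A \<longrightarrow>
        (interior A \<noteq> {} \<longleftrightarrow>
           A = UNIV \<or> 0 \<notin> wstar_closed_convex_hull (sphere 0 1 \<inter> dual_cone A)))
    \<and> (\<forall>K::'a set. K \<noteq> {} \<and> closed K \<and> convex K \<longrightarrow>
        (interior (recession_cone K) \<noteq> {} \<longleftrightarrow>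
           K = UNIV \<or>
           0 \<notin> wstar_closed_convex_hull (sphere 0 1 \<inter> uminus ` barrier_cone K)))"
proof (intro conjI allI impI)
  fix A :: "'a set" and e :: 'a
  assume A: "closed A \<and> convex_cone A \<and> A \<noteq> UNIV"
  then have "sphere 0 1 \<inter> dual_cone A \<noteq> {}" using dual_cone_separation[of A] by blast
  have "e \<in> interior A \<longleftrightarrow> (\<exists>\<delta>>0. \<forall>f\<in>sphere 0 1 \<inter> dual_cone A. \<delta> \<le> blinfun_apply f e)"
    using A by (intro interior_closed_convex_cone_iff) auto
  also have "\<dots> \<longleftrightarrow> 0 < (INF f\<in>sphere 0 1 \<inter> dual_cone A. blinfun_apply f e)"
    by (rule uniformly_positive_iff_INF) (use \<open>sphere 0 1 \<inter> dual_cone A \<noteq> {}\<close> in auto)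
  finally show "e \<in> interior A \<longleftrightarrow> (INF f\<in>sphere 0 1 \<inter> dual_cone A. blinfun_apply f e) > 0" .
next
  fix A :: "'a set"
  assume "closed A \<and> convex_cone A"
  then have "interior A \<noteq> {} \<longleftrightarrow> 0 \<notin> wstar_closed_convex_hull (sphere 0 1 \<inter> dual_cone A)"
    by (intro nonempty_iff_zero_notin_wstar_closed_convex_hull interior_closed_convex_cone_iff) auto
  then show "interior A \<noteq> {} \<longleftrightarrow> A = UNIV \<or> 0 \<notin> wstar_closed_convex_hull (sphere 0 1 \<inter> dual_cone A)"
    by auto
next
  fix K :: "'a set"
  assume "K \<noteq> {} \<and> closed K \<and> convex K"
  then have "interior (recession_cone K) \<noteq> {} \<longleftrightarrow>
      0 \<notin> wstar_closed_convex_hull (sphere 0 1 \<inter> uminus ` barrier_cone K)"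
    by (intro nonempty_iff_zero_notin_wstar_closed_convex_hull interior_recession_cone_iff) auto
  moreover have "recession_cone (UNIV :: 'a set) = UNIV" by (simp add: recession_cone_def)
  ultimately show "interior (recession_cone K) \<noteq> {} \<longleftrightarrow>
      K = UNIV \<or> 0 \<notin> wstar_closed_convex_hull (sphere 0 1 \<inter> uminus ` barrier_cone K)"
    by auto
qed

end
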